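(* Let $m\in\{1,2\}$, $\gamma\in(1,2]$ and $z\in(z_g,z_M]$. Then the continuation to the right, $C:[V_6,0)\to(0,\infty)$, of the local real-analytic solution through $P_6$ satisfies $C(V)<\sqrt{-V}$ for all $V\in[V_6,0)$; in particular $C(V)\to0$ as $V\to0^-$.
   Context: Fix $m\in\{1,2\}$. For $z>0$ put $\lambda=1+m\gamma z$, $a_1=1+\frac{m(\gamma-1)}{2}$, $a_2=\frac{m(\gamma-1)+mz\gamma(\gamma-3)}{2}$, $a_3=\frac{mz\gamma(\gamma-1)}{2}$, $G(V,C;\gamma,z)=C^2[(m+1)V+2mz]-V(1+V)(\lambda+V)$, $F(V,C;\gamma,z)=C\{C^2[1+\frac{mz}{1+V}]-a_1(1+V)^2+a_2(1+V)-a_3\}$; ODE $\frac{dC}{dV}=\frac FG$. $z_M=(\sqrt\gamma+\sqrt2)^{-2}$; $w(z)=\sqrt{1-2(\gamma+2)z+(\gamma-2)^2z^2}$, $V_6=\frac{-1+(\gamma-2)z-w}{2}$, $C_6=1+V_6$, $P_6=(V_6,C_6)$. The local solution is the real-analytic solution near $V_6$ with $C(V_6)=C_6$ and $C'(V_6)$ equal to the unique negative root of $-G_Cc^2+(F_C-G_V)c+F_V=0$ (partials at $P_6$); it extends as a positive decreasing solution on $[V_6,0)$. $z_g$: value of $z$ with $V_6(z)=\frac{-2(1+m\gamma z)}{\gamma+1+m(\gamma-1)}$ (explicitly $\frac{\sqrt{\gamma^2+(\gamma-1)^2}-\gamma}{\gamma(\gamma-1)}$ for $m=1$, $\frac{\sqrt{(2\gamma^2-\gamma+1)^2+2\gamma(\gamma-1)[4\gamma(\gamma-1)+8/3]}-(2\gamma^2-\gamma+1)}{\gamma[4\gamma(\gamma-1)+8/3]}$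 for $m=2$). *)

theory Defs
  imports "HOL-Analysis.Analysis"
begin

definition lam :: "real \<Rightarrow> real \<Rightarrow> real \<Rightarrow> real" where
  "lam m \<gamma> z = 1 + m * \<gamma> * z"
definition a1 :: "real \<Rightarrow> real \<Rightarrow> real" where
  "a1 m \<gamma> = 1 + m * (\<gamma> - 1) / 2"
definition a2 :: "real \<Rightarrow> real \<Rightarrow> real \<Rightarrow> real" where
  "a2 m \<gamma> z = (m * (\<gamma> - 1) + m * z * \<gamma> * (\<gamma> - 3)) / 2"
definition a3 :: "real \<Rightarrow> real \<Rightarrow> real \<Rightarrow> real" where
  "a3 m \<gamma> z = m * z * \<gamma> * (\<gamma> - 1) / 2"

definition GG :: "real \<Rightarrow> real \<Rightarrow> real \<Rightarrow> real \<Rightarrow> real \<Rightarrow> real" where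
  "GG m \<gamma> z V C = C^2 * ((m + 1) * V + 2 * m * z) - V * (1 + V) * (lam m \<gamma> z + V)"
definition FF :: "real \<Rightarrow> real \<Rightarrow> real \<Rightarrow> real \<Rightarrow> real \<Rightarrow> real" where
  "FF m \<gamma> z V C = C * (C^2 * (1 + m * z / (1 + V)) - a1 m \<gamma> * (1 + V)^2
      + a2 m \<gamma> z * (1 + V) - a3 m \<gamma> z)"

definition zM :: "real \<Rightarrow> real" where
  "zM \<gamma> = 1 / (sqrt \<gamma> + sqrt 2)^2"
definition ww :: "real \<Rightarrow> real \<Rightarrow> real" where
  "ww \<gamma> z = sqrt (1 - 2 * (\<gamma> + 2) * z + (\<gamma> - 2)^2 * z^2)"
definition V6 :: "real \<Rightarrow> real \<Rightarrow> real" where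
  "V6 \<gamma> z = (-1 + (\<gamma> - 2) * z - ww \<gamma> z) / 2"
definition C6 :: "real \<Rightarrow> real \<Rightarrow> real" where
  "C6 \<gamma> z = 1 + V6 \<gamma> z"

definition zg :: "real \<Rightarrow> real \<Rightarrow> real" where
  "zg m \<gamma> = (if m = 1 then (sqrt (\<gamma>^2 + (\<gamma> - 1)^2) - \<gamma>) / (\<gamma> * (\<gamma> - 1))
     else (sqrt ((2*\<gamma>^2 - \<gamma> + 1)^2 + 2*\<gamma>*(\<gamma> - 1)*(4*\<gamma>*(\<gamma> - 1) + 8/3))
             - (2*\<gamma>^2 - \<gamma> + 1)) / (\<gamma> * (4*\<gamma>*(\<gamma> - 1) + 8/3)))"

definition GV6 where "GV6 m \<gamma> z = deriv (\<lambda>v. GG m \<gamma> z v (C6 \<gamma> z)) (V6 \<gamma> z)"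
definition GC6 where "GC6 m \<gamma> z = deriv (\<lambda>c. GG m \<gamma> z (V6 \<gamma> z) c) (C6 \<gamma> z)"
definition FV6 where "FV6 m \<gamma> z = deriv (\<lambda>v. FF m \<gamma> z v (C6 \<gamma> z)) (V6 \<gamma> z)"
definition FC6 where "FC6 m \<gamma> z = deriv (\<lambda>c. FF m \<gamma> z (V6 \<gamma> z) c) (C6 \<gamma> z)"

definition real_analytic_at :: "(real \<Rightarrow> real) \<Rightarrow> real \<Rightarrow> bool" where
  "real_analytic_at f x0 \<longleftrightarrow> (\<exists>r>0. \<exists>a::nat \<Rightarrow> real.
      \<forall>x. \<bar>x - x0\<bar> < r \<longrightarrow> (\<lambda>n. a n * (x - x0)^n) sums f x)"

end

theory Submission
  imports Defs
begin

text \<open>Write q = C6, so that V6 = q - 1 and q is a root of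
q^2 - (1 + (\<gamma> - 2) z) q + \<gamma> z = 0. The solution is trapped below the barrier
min q (sqrt (-V)). On the plateau C = q, V \<le> -q^2, one has G > 0 > F, so solutions
cross it downwards; on the parabola C = sqrt (-V) the slope F/G is smaller than the slope
of sqrt (-V). Since C starts at the corner (V6, q), strictly below sqrt (-V6), and
initially decreases, a first point where it reaches the barrier is impossible.
The hypotheses zg < z \<le> zM enter only through \<gamma> z (3 + \<gamma>) > \<gamma> - 1, z \<le> 69/400
and the nonnegativity of the radicand of w.\<close>

lemma continuous_lt_barrier:
  fixes f g :: "real \<Rightarrow> real"
  assumes contf: "continuous_on {a..b} f" and contg: "continuous_on {a..b} g"
    and start: "f a < g a" and "a \<le> b"
    and touch: "\<And>x. a < x \<Longrightarrow> x \<le> b \<Longrightarrow> f x = g x \<Longrightarrow>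
      \<exists>d>0. \<forall>h. 0 < h \<longrightarrow> h < d \<longrightarrow> g (x - h) < f (x - h)"
  shows "f b < g b"
proof (rule ccontr)
  assume "\<not> f b < g b"
  define S where "S = {x \<in> {a..b}. g x \<le> f x}"
  have "compact S"
    unfolding compact_eq_bounded_closed S_def
    using continuous_on_closed_Collect_le[OF contg contf closed_atLeastAtMost]
    by (auto intro: bounded_subset[of "{a..b}"])
  moreover have "b \<in> S" using \<open>\<not> f b < g b\<close> \<open>a \<le> b\<close> by (simp add: S_def)
  ultimately obtain x1 where x1: "x1 \<in> S" and first: "\<forall>y\<in>S. x1 \<le> y"
    using compact_attains_inf[of S] by auto
  have "a < x1" using x1 start by (cases "x1 = a") (auto simp: S_def)
  have "x1 \<le> b" using x1 by (simp add: S_def)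
  have below: "f y < g y" if "a \<le> y" "y < x1" for y
  proof (rule ccontr)
    assume "\<not> f y < g y"
    hence "y \<in> S" using that \<open>x1 \<le> b\<close> by (simp add: S_def)
    thus False using first \<open>y < x1\<close> by force
  qed
  have "f x1 = g x1"
  proof -
    have "continuous_on {a..x1} (\<lambda>y. g y - f y)"
      using continuous_on_diff[OF contg contf] \<open>x1 \<le> b\<close>
      by (elim continuous_on_subset) auto
    then obtain y where y: "a \<le> y" "y \<le> x1" "g y - f y = 0"
      using IVT2'[of "\<lambda>y. g y - f y" x1 0 a] x1 start \<open>a < x1\<close> by (auto simp: S_def)
    hence "y \<in> S" using \<open>x1 \<le> b\<close> by (simp add: S_def)
    thus ?thesis using first y by force
  qed
  then obtain d where "d > 0" and above: "\<And>h. 0 < h \<Longrightarrow> h < d \<Longrightarrow> g (x1 - h) < f (x1 - h)"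
    using touch \<open>a < x1\<close> \<open>x1 \<le> b\<close> by blast
  define h where "h = min d (x1 - a) / 2"
  have "0 < h" "h < d" "a \<le> x1 - h" "x1 - h < x1"
    using \<open>d > 0\<close> \<open>a < x1\<close> by (auto simp: h_def min_def field_simps)
  thus False using above[of h] below[of "x1 - h"] by simp
qed

lemma add_le_sqrt_square_add:
  fixes b s t :: real
  assumes "t * (2*b + t) \<le> s"
  shows "b + t \<le> sqrt (b^2 + s)"
  using assms by (intro real_le_rsqrt) (simp add: power2_eq_square algebra_simps)

lemma mult_three_minus_le:
  fixes g :: real
  shows "g*(3-g) \<le> 9/4"
proof -
  have "0 \<le> (g - 3/2)^2" by simp
  thus ?thesis by (simp add: power2_eq_square algebra_simps)
qed

lemma power3_le_quarter_cube:
  fixes u :: real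
  assumes "0 \<le> u" "u \<le> 1/4"
  shows "u^3 \<le> 1/64"
proof -
  have "u^3 \<le> (1/4)^3" using assms by (intro power_mono) auto
  thus ?thesis by (simp add: power3_eq_cube)
qed

lemma interpolate_neg:
  fixes g X Y :: real
  assumes "X < 0" "Y < 0" "1 \<le> g" "g \<le> 2"
  shows "(2-g)*X + (g-1)*Y < 0"
proof (cases "g = 2")
  case False
  hence "(2-g)*X < 0" using assms by (simp add: mult_pos_neg)
  moreover have "(g-1)*Y \<le> 0" using assms by (simp add: mult_nonneg_nonpos)
  ultimately show ?thesis by linarith
qed (use assms in simp)

lemma zM_bounds:
  fixes g z :: real
  assumes "1 < g" "g \<le> 2" "z \<le> zM g"
  shows "z \<le> 69/400" "0 \<le> 1 - 2*(g+2)*z + (g-2)^2*z^2"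
proof -
  define p where "p = sqrt g"
  define r where "r = sqrt (2::real)"
  have p2: "p^2 = g" using assms by (simp add: p_def)
  have r2: "r^2 = 2" by (simp add: r_def)
  have p1: "p \<ge> 1" using assms by (simp add: p_def)
  have r14: "r \<ge> 1.414" unfolding r_def by (rule real_le_rsqrt) (simp add: power2_eq_square)
  have pr: "(p+r)^2 \<ge> 400/69"
  proof -
    have "(2.414::real)^2 \<le> (p+r)^2" using p1 r14 by (intro power_mono) auto
    thus ?thesis by (simp add: power2_eq_square)
  qed
  have zz: "z*(p+r)^2 \<le> 1"
  proof -
    have "z \<le> 1/(p+r)^2" using assms by (simp add: zM_def p_def r_def)
    moreover have "(p+r)^2 > 0" using pr by linarith
    ultimately show ?thesis by (simp add: le_divide_eq)
  qed
  show "z \<le> 69/400"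
  proof (cases "z \<le> 0")
    case False
    have "z*(400/69) \<le> z*(p+r)^2" using pr False by (intro mult_left_mono) auto
    thus ?thesis using zz by simp
  qed simp
  have fac: "1 - 2*(g+2)*z + (g-2)^2*z^2 = (1 - (p+r)^2*z)*(1 - (p-r)^2*z)"
    by (simp add: p2[symmetric] r2[symmetric] power2_eq_square algebra_simps)
  have f1: "1 - (p+r)^2*z \<ge> 0" using zz by (simp add: algebra_simps)
  have f2: "1 - (p-r)^2*z \<ge> 0"
  proof (cases "z \<le> 0")
    case True
    have "(p-r)^2*z \<le> 0" using True by (simp add: mult_nonneg_nonpos)
    thus ?thesis by linarith
  next
    case False
    have "(p-r)^2 \<le> (p+r)^2" using p1 r14 by (simp add: power2_eq_square algebra_simps)
    hence "z*(p-r)^2 \<le> z*(p+r)^2" using False by (intro mult_left_mono) auto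
    thus ?thesis using zz by (simp add: algebra_simps)
  qed
  show "0 \<le> 1 - 2*(g+2)*z + (g-2)^2*z^2" unfolding fac using f1 f2 by simp
qed

lemma zg_1_ge:
  fixes g :: real
  assumes "1 < g" "g \<le> 2"
  shows "(g - 1)/(g*(3+g)) \<le> zg 1 g"
proof -
  define e where "e = g - 1"
  define t where "t = e^2/(3+g)"
  have e: "0 < e" "e \<le> 1" using assms by (auto simp: e_def)
  have "t \<le> 1/(3+g)" using e assms by (simp add: t_def divide_right_mono power_le_one)
  also have "\<dots> \<le> 1" using assms by simp
  also have "\<dots> \<le> 3 - g" using assms by simp
  finally have "t*(2*g + t) \<le> t*(3+g)" using assms by (intro mult_left_mono) (auto simp: t_def)
  also have "\<dots> = e^2" using assms by (simp add: t_def)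
  finally have "g + t \<le> sqrt (g^2 + e^2)" by (rule add_le_sqrt_square_add)
  hence "t/(g*e) \<le> (sqrt (g^2 + e^2) - g)/(g*e)" using assms e by (intro divide_right_mono) auto
  also have "\<dots> = zg 1 g" by (simp add: zg_def e_def)
  finally show ?thesis
    using assms e by (simp add: t_def e_def power2_eq_square divide_divide_eq_left mult_ac)
qed

lemma zg_2_ge:
  fixes g :: real
  assumes "1 < g" "g \<le> 2"
  shows "(g - 1)/(g*(3+g)) \<le> zg 2 g"
proof -
  define e where "e = g - 1"
  define k where "k = 4*g*e + 8/3"
  define b where "b = 2*g^2 - g + 1"
  define t where "t = e*k/(3+g)"
  have e: "0 < e" using assms by (simp add: e_def)
  have k: "0 < k" using assms e by (simp add: k_def add_pos_pos)
  have "g^3 \<le> 2*g^2" "g^2 \<le> 2*g"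
    using assms by (simp_all add: power2_eq_square power3_eq_cube mult_right_mono)
  moreover have "2*g*(3+g)^2 - (2*b*(3+g) + e*k) = -6*g^3 + 10*g^2 + (46/3)*g - 10/3"
    unfolding b_def k_def e_def
    by (simp add: power2_eq_square power3_eq_cube algebra_simps, simp add: field_simps)
  ultimately have "2*b*(3+g) + e*k \<le> 2*g*(3+g)^2" using assms by linarith
  moreover have "(2*b + t)*(3+g) = 2*b*(3+g) + e*k" using assms by (simp add: t_def field_simps)
  ultimately have "(2*b + t)*(3+g) \<le> (2*g*(3+g))*(3+g)" by (simp add: power2_eq_square mult_ac)
  hence "2*b + t \<le> 2*g*(3+g)" using assms by (simp add: mult_le_cancel_right)
  hence "t*(2*b + t) \<le> t*(2*g*(3+g))" using assms e k by (intro mult_left_mono) (auto simp: t_def)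
  also have "\<dots> = 2*g*e*k" using assms by (simp add: t_def)
  finally have "b + t \<le> sqrt (b^2 + 2*g*e*k)" by (rule add_le_sqrt_square_add)
  hence "t/(g*k) \<le> (sqrt (b^2 + 2*g*e*k) - b)/(g*k)" using assms k by (intro divide_right_mono) auto
  also have "\<dots> = zg 2 g" by (simp add: zg_def e_def b_def k_def algebra_simps)
  finally show ?thesis
    using assms k by (simp add: t_def e_def divide_divide_eq_left mult_ac)
qed

lemma zg_lower_bound:
  fixes m g z :: real
  assumes "m = 1 \<or> m = 2" "1 < g" "g \<le> 2" "zg m g < z"
  shows "g*z*(3+g) > g - 1"
proof -
  have "(g - 1)/(g*(3+g)) < z" using assms zg_1_ge zg_2_ge by fastforce
  thus ?thesis using assms by (simp add: divide_less_eq mult_ac)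
qed

lemma C6_root:
  fixes g z :: real
  assumes "1 < g" "g \<le> 2" "0 < z" "z \<le> 1/5" "0 \<le> 1 - 2*(g+2)*z + (g-2)^2*z^2"
  shows "(C6 g z)^2 - (1+(g-2)*z)*C6 g z + g*z = 0" "0 < C6 g z" "C6 g z \<le> 1/2"
proof -
  define w where "w = ww g z"
  have w2: "w^2 = 1 - 2*(g+2)*z + (g-2)^2*z^2" using assms by (simp add: w_def ww_def)
  have w0: "w \<ge> 0" using assms(5) by (simp add: w_def ww_def)
  have q: "C6 g z = (1 + (g-2)*z - w)/2" by (simp add: C6_def V6_def w_def field_simps)
  show R: "(C6 g z)^2 - (1+(g-2)*z)*C6 g z + g*z = 0"
    unfolding q using w2 by (simp add: power2_eq_square field_simps)
  have p: "1 + (g-2)*z > 0"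
  proof -
    have "(2-g)*z \<le> 1*(1/5)" using assms by (intro mult_mono) auto
    thus ?thesis by (simp add: algebra_simps)
  qed
  have "(g-2)*z \<le> 0" using assms by (simp add: mult_nonpos_nonneg)
  thus "C6 g z \<le> 1/2" unfolding q using w0 by simp
  have pq: "1 + (g-2)*z - C6 g z > 0" unfolding q using w0 p by (simp add: field_simps)
  have "C6 g z * (1 + (g-2)*z - C6 g z) = g*z" using R by (simp add: power2_eq_square algebra_simps)
  moreover have "g*z > 0" using assms by simp
  ultimately show "0 < C6 g z" using pq by (metis zero_less_mult_iff not_less_iff_gr_or_eq)
qed

lemma root_product_form:
  fixes g z q :: real
  assumes R: "q^2 - (1+(g-2)*z)*q + g*z = 0"
  shows "q*(1-q) = z*(g*(1-q)+2*q)"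
  using R by (simp add: algebra_simps power2_eq_square)

lemma gamma_z_le_root:
  fixes g z q :: real
  assumes R: "q^2 - (1+(g-2)*z)*q + g*z = 0" and "0 < q" "q < 1" "0 < z"
  shows "g*z \<le> q"
proof -
  have "q*(1-q) = z*(g*(1-q)+2*q)" using root_product_form[OF R] .
  hence "(q - g*z)*(1-q) = 2*z*q" by (simp add: algebra_simps)
  hence "(q - g*z)*(1-q) \<ge> 0" using assms by simp
  thus ?thesis using \<open>q<1\<close> by (simp add: zero_le_mult_iff)
qed

lemma gamma_z_le_root_mul:
  fixes g z q :: real
  assumes R: "q^2 - (1+(g-2)*z)*q + g*z = 0" and "0 < q" "0 < z" "g \<le> 2"
  shows "g*z \<le> q*(1-q)"
proof -
  have "g*z = q*(1-q) - q*(2-g)*z" using R by (simp add: algebra_simps power2_eq_square)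
  moreover have "q*(2-g)*z \<ge> 0" using assms by simp
  ultimately show ?thesis by linarith
qed

lemma root_sq_le_2z:
  fixes g z q :: real
  assumes R: "q^2 - (1+(g-2)*z)*q + g*z = 0" and "0 < q" "q \<le> 1/2" "0 < z" "1 < g" "g \<le> 2"
  shows "q^2 \<le> 2*z"
proof -
  have "q*(1-q) = z*(g*(1-q)+2*q)" using root_product_form[OF R] .
  moreover have "g*(1-q) \<le> 2*(1-q)" using assms by (intro mult_right_mono) auto
  hence "z*(g*(1-q)+2*q) \<le> z*2" using assms by (intro mult_left_mono) auto
  moreover have "q^2 \<le> q*(1-q)" using assms by (simp add: power2_eq_square mult_left_mono)
  ultimately show ?thesis by linarith
qed

subsection \<open>The vector field on the plateau C = q\<close>

lemma plateau_G_factor_pos: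
  fixes m g z q x :: real
  assumes R: "q^2 - (1+(g-2)*z)*q + g*z = 0" and "0 < q" "q \<le> 1/2" "0 < z" "1 < g" "g \<le> 2"
    and "1 \<le> m" and "q < x" "x \<le> 1 - q^2"
  shows "m*q^2 - x^2 - x*q + (1 - m*g*z)*(x+q) + m*g*z > 0"
proof -
  have e: "m*q^2 - x^2 - x*q + (1 - m*g*z)*(x+q) + m*g*z = m*q^2 + (x+q)*(1-x) + m*(g*z)*(1-x-q)"
    by (simp add: algebra_simps power2_eq_square)
  have gz: "g*z \<le> q*(1-q)" using gamma_z_le_root_mul[OF R] assms by simp
  have gz0: "0 \<le> g*z" using assms by simp
  have a: "1-x-q \<ge> -(q*(1-q))" using assms by (simp add: power2_eq_square algebra_simps)
  have "(g*z)*(1-x-q) \<ge> -((g*z)*(q*(1-q)))" using mult_left_mono[OF a gz0] by simp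
  moreover have "(g*z)*(q*(1-q)) \<le> (q*(1-q))*(q*(1-q))" using gz assms
    by (intro mult_right_mono) (auto simp: mult_nonneg_nonneg)
  ultimately have b: "(g*z)*(1-x-q) \<ge> -((q*(1-q))*(q*(1-q)))" by linarith
  have c: "(q*(1-q))*(q*(1-q)) < q^2"
  proof -
    have "(1-q)*(1-q) < 1" using assms by (simp add: algebra_simps)
    hence "q^2*((1-q)*(1-q)) < q^2*1" using assms by (intro mult_strict_left_mono) auto
    thus ?thesis by (simp add: power2_eq_square algebra_simps)
  qed
  have "m*((g*z)*(1-x-q)) \<ge> m*(-((q*(1-q))*(q*(1-q))))" using b assms by (intro mult_left_mono) auto
  moreover have "m*(q*(1-q))*(q*(1-q)) < m*q^2" using c assms by simp
  moreover have "(x+q)*(1-x) \<ge> 0" using assms by (intro mult_nonneg_nonneg) (auto, smt (verit) zero_le_square power2_eq_square)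
  ultimately show ?thesis unfolding e by (simp add: algebra_simps)
qed

lemma plateau_F_factor_neg:
  fixes m g z q x :: real
  assumes R: "q^2 - (1+(g-2)*z)*q + g*z = 0" and "0 < q" "q \<le> 1/2" "0 < z" "1 < g" "g \<le> 2"
    and hm: "m = 1 \<or> m = 2" and hzg: "g*z*(3+g) > g - 1" and "q \<le> x"
  shows "2*q^2 - (2+m*(g-1))*(x^2+x*q+q^2) + (m*(g-1) + m*z*g*(g-3))*(x+q) - m*z*g*(g-1) < 0"
proof -
  have rr: "q*(1-q) - z*(g*(1-q)+2*q) = 0" using root_product_form[OF R] by simp
  have e: "2*q^2 - (2+m*(g-1))*(x^2+x*q+q^2) + (m*(g-1) + m*z*g*(g-3))*(x+q) - m*z*g*(g-1)
     = -2*x*(x+q) - m*z*g*(3-g)*(x+q) + m*(g-1)*x*(1-x-q) + m*(g-1)*z*q*(2-g)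
       + m*(g-1)*(q*(1-q) - z*(g*(1-q)+2*q))"
    by (simp add: algebra_simps power2_eq_square)
  have m0: "m > 0" using hm by auto
  have A: "m*(g-1)*z*q*(2-g) \<le> m*z*g*(3-g)*q"
  proof -
    have "(g-1)*(2-g) \<le> g*(3-g)" by (simp add: algebra_simps)
    hence "((g-1)*(2-g))*(m*z*q) \<le> (g*(3-g))*(m*z*q)" using assms m0
      by (intro mult_right_mono) auto
    thus ?thesis by (simp add: algebra_simps)
  qed
  have gzq: "g*z \<le> q" using gamma_z_le_root[OF R] assms by simp
  have x0: "x > 0" using assms by simp
  have core: "m*(g-1)*(1-x-q) < 2*(x+q) + m*z*g*(3-g)"
  proof -
    have y: "x + q \<ge> 2*(g*z)" using gzq assms by simp
    have "m*(g-1) < g*z*(4+m+m*g)"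
    proof (cases "m = 1")
      case True
      have "g*z*(3+g) \<le> g*z*(5+g)" using assms by (intro mult_left_mono) auto
      thus ?thesis using True hzg by simp
    next
      case False
      hence "m = 2" using hm by simp
      thus ?thesis using hzg by (simp add: algebra_simps)
    qed
    moreover have "(2+m*(g-1))*(2*(g*z)) \<le> (2+m*(g-1))*(x+q)"
      using y assms m0 by (intro mult_left_mono) auto
    ultimately show ?thesis by (simp add: algebra_simps)
  qed
  have B: "m*(g-1)*x*(1-x-q) < x*(2*(x+q) + m*z*g*(3-g))"
  proof -
    have "x*(m*(g-1)*(1-x-q)) < x*(2*(x+q) + m*z*g*(3-g))"
      using core x0 by (intro mult_strict_left_mono) auto
    thus ?thesis by (simp add: algebra_simps)
  qed
  show ?thesis unfolding e rr using A B by (simp add: algebra_simps)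
qed

lemma plateau_signs:
  fixes m g z q V :: real
  assumes hm: "m = 1 \<or> m = 2" and "1 < g" "g \<le> 2" "0 < z"
    and R: "q^2 - (1+(g-2)*z)*q + g*z = 0" and "0 < q" "q \<le> 1/2" and hzg: "g*z*(3+g) > g - 1"
    and "q - 1 < V" "V \<le> -(q^2)"
  shows "GG m g z V q > 0" "FF m g z V q < 0"
proof -
  define x where "x = 1 + V"
  have xq: "q < x" "x \<le> 1 - q^2" using assms by (auto simp: x_def)
  have m1: "1 \<le> m" using hm by auto
  have eG: "GG m g z V q = (x-q)*(m*q^2 - x^2 - x*q + (1 - m*g*z)*(x+q) + m*g*z)
      + m*q*(q^2 - (1+(g-2)*z)*q + g*z)"
    unfolding GG_def lam_def x_def by (simp add: power2_eq_square algebra_simps)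
  have "m*q^2 - x^2 - x*q + (1 - m*g*z)*(x+q) + m*g*z > 0"
    using plateau_G_factor_pos[OF R] assms xq m1 by simp
  thus "GG m g z V q > 0" unfolding eG R using xq by simp
  have x0: "x > 0" using xq assms by simp
  have eF: "2*x*FF m g z V q = q*((x-q)*(2*q^2 - (2+m*(g-1))*(x^2+x*q+q^2) + (m*(g-1) + m*z*g*(g-3))*(x+q) - m*z*g*(g-1))
      - m*q*(g-1)*(q^2 - (1+(g-2)*z)*q + g*z))"
    using x0 unfolding FF_def a1_def a2_def a3_def x_def[symmetric]
    by (simp add: x_def power2_eq_square field_simps)
  have "2*q^2 - (2+m*(g-1))*(x^2+x*q+q^2) + (m*(g-1) + m*z*g*(g-3))*(x+q) - m*z*g*(g-1) < 0"
    using plateau_F_factor_neg[OF R] assms xq by simp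
  hence "2*x*FF m g z V q < 0" unfolding eF R using xq assms by (simp add: mult_pos_neg)
  thus "FF m g z V q < 0" using x0 by (simp add: mult_less_0_iff)
qed

subsection \<open>The vector field on the parabola C^2 = -V\<close>

lemma parabola_G_factor_pos:
  fixes m g z u :: real
  assumes hm: "m = 1 \<or> m = 2" and "1 < g" "g \<le> 2" "0 < z" "z \<le> 1/5" "0 < u" "u \<le> 1/4" "u \<le> 2*z"
  shows "0 < 1 + m*g*z + 2*m*z - u*(m+3+m*g*z) + u^2"
proof -
  have m0: "m > 0" using hm by auto
  have a: "u*(m*g*z) \<le> 1*(m*g*z)" using assms m0 by (intro mult_right_mono) auto
  have b: "u^2 \<ge> 0" by simp
  have c: "1 + 2*m*z - u*(m+3) > 0"
  proof (cases "z \<le> 1/16")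
    case True
    have "u*(m+3) \<le> (2*z)*(m+3)" using assms m0 by (intro mult_right_mono) auto
    thus ?thesis using True hm by auto
  next
    case False
    have "u*(m+3) \<le> (1/4)*(m+3)" using assms m0 by (intro mult_right_mono) auto
    thus ?thesis using False hm by auto
  qed
  have "1 + m*g*z + 2*m*z - u*(m+3+m*g*z) + u^2 = (1 + 2*m*z - u*(m+3)) + (1*(m*g*z) - u*(m*g*z)) + u^2"
    by (simp add: algebra_simps)
  thus ?thesis using a b c by linarith
qed

text \<open>In the next two lemmas the polynomial becomes affine in \<gamma> after bounding \<gamma>(3 - \<gamma>)
by 9/4 and dropping \<gamma>(\<gamma> - 2) \<le> 0; A + B and A + 2B are its values at \<gamma> = 1 and \<gamma> = 2.\<close>

lemma parabola_poly_neg_m1: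
  fixes g u :: real
  assumes a: "1 \<le> g" "g \<le> 2" "0 \<le> u" "u \<le> 1/4"
  shows "-1 + (69/400)*(2-g) + u*(2+g + (69/400)*g*(3-g)) + u^2*(-1 - 2*g + (69/400)*g*(g-2))
    + u^3*g < 0"
proof -
  define Z where "Z = (69/400::real)"
  define A where "A = -1 + 2*Z + 2*u - u^2 + Z*(9/4)*u"
  define B where "B = -Z + u - 2*u^2 + u^3"
  have d1: "Z*u*(g*(3-g) - 9/4) \<le> 0"
    using mult_three_minus_le[of g] a by (simp add: Z_def mult_nonneg_nonpos)
  have d2: "Z*g*(g-2)*u^2 \<le> 0" using a by (simp add: Z_def mult_nonneg_nonpos mult_nonpos_nonneg)
  have e: "-1 + Z*(2-g) + u*(2+g + Z*g*(3-g)) + u^2*(-1 - 2*g + Z*g*(g-2)) + u^3*g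
     = (2-g)*(A+B) + (g-1)*(A+2*B) + Z*u*(g*(3-g) - 9/4) + Z*g*(g-2)*u^2"
    by (simp add: A_def B_def algebra_simps power2_eq_square power3_eq_cube, simp add: field_simps)
  have u3: "u^3 \<le> 1/64" using power3_le_quarter_cube a by blast
  have q1: "0 \<le> (u - 1/4)*(u - 3/4)" using a by (intro mult_nonpos_nonpos) auto
  have q2: "0 \<le> (u - 1/4)*(u - 11/20)" using a by (intro mult_nonpos_nonpos) auto
  have "A + B = -1 + Z + Z*(9/4)*u + 3*u - 3*u^2 + u^3" by (simp add: A_def B_def)
  moreover have "3*u - 3*u^2 \<le> 9/16"
    using q1 by (simp add: power2_eq_square algebra_simps field_simps)
  ultimately have AB1: "A + B < 0" using u3 a by (simp add: Z_def)
  have "A + 2*B = -1 + Z*(9/4)*u + 4*u - 5*u^2 + 2*u^3" by (simp add: A_def B_def)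
  moreover have "4*u - 5*u^2 \<le> 11/16"
    using q2 by (simp add: power2_eq_square algebra_simps field_simps)
  ultimately have AB2: "A + 2*B < 0" using u3 a by (simp add: Z_def)
  show ?thesis using e d1 d2 interpolate_neg[OF AB1 AB2 a(1,2)] unfolding Z_def by linarith
qed

lemma parabola_poly_neg_m2:
  fixes g u :: real
  assumes a: "1 \<le> g" "g \<le> 2" "0 \<le> u" "u \<le> 1/4"
  shows "-1 + 2*(69/400)*(2-g) + u*(2*g + 2*(69/400)*g*(3-g))
    + u^2*(2 - 4*g + 2*(69/400)*g*(g-2)) + u^3*(2*g-1) < 0"
proof -
  define Z where "Z = (69/400::real)"
  define A where "A = -1 + 4*Z + 2*u^2 - u^3 + 2*Z*(9/4)*u"
  define B where "B = -2*Z + 2*u - 4*u^2 + 2*u^3"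
  have d1: "2*Z*u*(g*(3-g) - 9/4) \<le> 0"
    using mult_three_minus_le[of g] a by (simp add: Z_def mult_nonneg_nonpos)
  have d2: "2*Z*g*(g-2)*u^2 \<le> 0" using a by (simp add: Z_def mult_nonneg_nonpos mult_nonpos_nonneg)
  have e: "-1 + 2*Z*(2-g) + u*(2*g + 2*Z*g*(3-g)) + u^2*(2 - 4*g + 2*Z*g*(g-2)) + u^3*(2*g-1)
     = (2-g)*(A+B) + (g-1)*(A+2*B) + 2*Z*u*(g*(3-g) - 9/4) + 2*Z*g*(g-2)*u^2"
    by (simp add: A_def B_def algebra_simps power2_eq_square power3_eq_cube, simp add: field_simps)
  have u3: "u^3 \<le> 1/64" using power3_le_quarter_cube a by blast
  have q1: "0 \<le> (u - 1/4)*(u - 3/4)" using a by (intro mult_nonpos_nonpos) auto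
  have q2: "0 \<le> (u - 1/4)*(u - 5/12)" using a by (intro mult_nonpos_nonpos) auto
  have "A + B = -1 + 2*Z + 2*Z*(9/4)*u + 2*u - 2*u^2 + u^3" by (simp add: A_def B_def)
  moreover have "2*u - 2*u^2 \<le> 3/8"
    using q1 by (simp add: power2_eq_square algebra_simps field_simps)
  ultimately have AB1: "A + B < 0" using u3 a by (simp add: Z_def)
  have "A + 2*B = -1 + 2*Z*(9/4)*u + 4*u - 6*u^2 + 3*u^3" by (simp add: A_def B_def)
  moreover have "4*u - 6*u^2 \<le> 5/8"
    using q2 by (simp add: power2_eq_square algebra_simps field_simps)
  ultimately have AB2: "A + 2*B < 0" using u3 a by (simp add: Z_def)
  show ?thesis using e d1 d2 interpolate_neg[OF AB1 AB2 a(1,2)] unfolding Z_def by linarith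
qed

text \<open>The polynomial is increasing in z, so it suffices to treat z = 69/400.\<close>

lemma parabola_poly_neg:
  fixes m g z u :: real
  assumes hm: "m = 1 \<or> m = 2" and "1 < g" "g \<le> 2" "0 < z" "z \<le> 69/400" "0 < u" "u \<le> 1/4"
  shows "-1 + m*z*(2-g) + u*(4-2*m+m*g+m*z*g*(3-g)) + u^2*(-4+3*m-2*m*g+m*z*g*(g-2))
     + u^3*(1+m*g-m) < 0"
proof -
  define Z where "Z = (69/400::real)"
  define cz where "cz = (2-g) + u*g*(3-g) + u^2*g*(g-2)"
  have e: "-1 + m*z*(2-g) + u*(4-2*m+m*g+m*z*g*(3-g)) + u^2*(-4+3*m-2*m*g+m*z*g*(g-2)) + u^3*(1+m*g-m)
     = (-1 + m*Z*(2-g) + u*(4-2*m+m*g+m*Z*g*(3-g)) + u^2*(-4+3*m-2*m*g+m*Z*g*(g-2)) + u^3*(1+m*g-m))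
       - m*(Z - z)*cz"
    by (simp add: cz_def algebra_simps power2_eq_square)
  have cz0: "cz \<ge> 0"
  proof -
    have "u^2 \<le> (1/4)^2" using assms by (intro power_mono) auto
    hence "u^2*g \<le> (1/16)*2" using assms by (intro mult_mono) (auto simp: power2_eq_square)
    hence "(2-g)*(1 - u^2*g) \<ge> 0" using assms by simp
    moreover have "u*g*(3-g) \<ge> 0" using assms by simp
    moreover have "cz = (2-g)*(1 - u^2*g) + u*g*(3-g)" by (simp add: cz_def algebra_simps)
    ultimately show ?thesis by simp
  qed
  have "m*(Z - z)*cz \<ge> 0" using cz0 hm assms by (intro mult_nonneg_nonneg) (auto simp: Z_def)
  moreover have "-1 + m*Z*(2-g) + u*(4-2*m+m*g+m*Z*g*(3-g)) + u^2*(-4+3*m-2*m*g+m*Z*g*(g-2)) + u^3*(1+m*g-m) < 0"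
  proof (cases "m = 1")
    case True
    show ?thesis using parabola_poly_neg_m1[of g u] assms unfolding True Z_def by (simp add: algebra_simps)
  next
    case False
    hence "m = 2" using hm by simp
    thus ?thesis using parabola_poly_neg_m2[of g u] assms unfolding Z_def by (simp add: algebra_simps)
  qed
  ultimately show ?thesis unfolding e by linarith
qed

lemma parabola_signs:
  fixes m g z q V :: real
  assumes hm: "m = 1 \<or> m = 2" and "1 < g" "g \<le> 2" "0 < z" "z \<le> 69/400"
    and R: "q^2 - (1+(g-2)*z)*q + g*z = 0" and "0 < q" "q \<le> 1/2"
    and "-(q^2) < V" "V < 0"
  shows "GG m g z V (sqrt (-V)) > 0"
    "FF m g z V (sqrt (-V)) / GG m g z V (sqrt (-V)) + 1/(2* sqrt (-V)) < 0"
proof -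
  define u where "u = -V"
  define r where "r = sqrt (-V)"
  have u0: "0 < u" using assms by (simp add: u_def)
  have r2: "r^2 = u" using assms by (simp add: r_def u_def)
  have r0: "r > 0" using assms by (simp add: r_def)
  have q2: "q^2 \<le> 1/4"
  proof -
    have "q^2 \<le> (1/2)^2" using assms by (intro power_mono) auto
    thus ?thesis by (simp add: power2_eq_square)
  qed
  have uq: "u < q^2" using assms by (simp add: u_def)
  have u14: "u \<le> 1/4" using uq q2 by simp
  have u2z: "u \<le> 2*z" using uq root_sq_le_2z[OF R] assms by simp
  define B where "B = 1 + m*g*z + 2*m*z - u*(m+3+m*g*z) + u^2"
  define P where "P = -1 + m*z*(2-g) + u*(4-2*m+m*g+m*z*g*(3-g)) + u^2*(-4+3*m-2*m*g+m*z*g*(g-2))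
     + u^3*(1+m*g-m)"
  have B0: "B > 0" unfolding B_def using parabola_G_factor_pos[of m g z u] assms u0 u14 u2z by simp
  have P0: "P < 0" unfolding P_def using parabola_poly_neg[of m g z u] assms u0 u14 by simp
  have eG: "GG m g z V r = u*B"
    unfolding GG_def lam_def B_def using r2 by (simp add: u_def power2_eq_square algebra_simps)
  show G0: "GG m g z V (sqrt (-V)) > 0" using eG B0 u0 by (simp add: r_def)
  define Y where "Y = u*(1 + m*z/(1-u)) - a1 m g*(1-u)^2 + a2 m g z*(1-u) - a3 m g z"
  have eF: "FF m g z V r = r*Y" unfolding FF_def Y_def using r2 by (simp add: u_def)
  have x0: "1 - u > 0" using u14 by simp
  have eN: "(1-u)*(2*u*Y + u*B) = u*P"
    using x0 unfolding Y_def B_def P_def a1_def a2_def a3_def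
    by (simp add: power2_eq_square power3_eq_cube field_simps)
  have N: "2*u*Y + u*B < 0"
  proof -
    have "(1-u)*(2*u*Y + u*B) < 0" unfolding eN using u0 P0 by (simp add: mult_pos_neg)
    thus ?thesis using x0 by (simp add: mult_less_0_iff)
  qed
  have "FF m g z V r / GG m g z V r + 1/(2*r) = (2*u*Y + u*B)/(2*r*GG m g z V r)"
    using r0 G0 unfolding eF eG using r2 u0 B0 by (simp add: field_simps power2_eq_square)
  also have "\<dots> < 0" using N r0 G0 by (simp add: divide_neg_pos r_def)
  finally show "FF m g z V (sqrt (-V)) / GG m g z V (sqrt (-V)) + 1/(2* sqrt (-V)) < 0"
    by (simp add: r_def)
qed

subsection \<open>Trapping the solution\<close>

definition trap_barrier :: "real \<Rightarrow> real \<Rightarrow> real" where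
  "trap_barrier q V = min q (sqrt (- V))"

context
  fixes m g z q :: real
  assumes hm: "m = 1 \<or> m = 2" and hg: "1 < g" "g \<le> 2" and hz: "0 < z" "z \<le> 69/400"
    and hzg: "g*z*(3+g) > g - 1"
    and root: "q^2 - (1+(g-2)*z)*q + g*z = 0" and hq: "0 < q" "q \<le> 1/2"
begin

lemma plateau_exit_left:
  assumes der: "(C has_real_derivative FF m g z x (C x) / GG m g z x (C x)) (at x)"
    and "q - 1 < x" "x \<le> -(q^2)" "C x = q"
  shows "\<exists>d>0. \<forall>h. 0 < h \<longrightarrow> h < d \<longrightarrow> q < C (x - h)"
proof -
  have "GG m g z x q > 0" "FF m g z x q < 0"
    using plateau_signs[OF hm hg hz(1) root hq hzg] assms(2,3) by auto
  hence "FF m g z x (C x) / GG m g z x (C x) < 0"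
    using \<open>C x = q\<close> by (simp add: divide_neg_pos)
  thus ?thesis using DERIV_neg_dec_left[OF der] \<open>C x = q\<close> by auto
qed

lemma parabola_exit_left:
  assumes der: "(C has_real_derivative FF m g z x (C x) / GG m g z x (C x)) (at x)"
    and "-(q^2) < x" "x < 0" "C x = sqrt (-x)"
  shows "\<exists>d>0. \<forall>h. 0 < h \<longrightarrow> h < d \<longrightarrow> sqrt (-(x - h)) < C (x - h)"
proof -
  have "((\<lambda>V. sqrt (-V)) has_real_derivative - 1 / (2 * sqrt (-x))) (at x)"
    using \<open>x < 0\<close> by (auto intro!: derivative_eq_intros simp: inverse_eq_divide)
  from DERIV_diff[OF der this]
  have "((\<lambda>V. C V - sqrt (-V)) has_real_derivative
      FF m g z x (C x) / GG m g z x (C x) + 1 / (2 * sqrt (-x))) (at x)" by simp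
  moreover have "FF m g z x (C x) / GG m g z x (C x) + 1 / (2 * sqrt (-x)) < 0"
    using parabola_signs(2)[OF hm hg hz root hq] assms(2-4) by simp
  ultimately show ?thesis using assms(4) by (force dest: DERIV_neg_dec_left)
qed

lemma barrier_exit_left:
  assumes der: "(C has_real_derivative FF m g z x (C x) / GG m g z x (C x)) (at x)"
    and "q - 1 < x" "x < 0" "C x = trap_barrier q x"
  shows "\<exists>d>0. \<forall>h. 0 < h \<longrightarrow> h < d \<longrightarrow> trap_barrier q (x - h) < C (x - h)"
proof (cases "x \<le> -(q^2)")
  case True
  hence "q \<le> sqrt (-x)" by (intro real_le_rsqrt) simp
  hence "C x = q" using assms(4) by (simp add: trap_barrier_def)
  then obtain d where "d > 0" "\<forall>h. 0 < h \<longrightarrow> h < d \<longrightarrow> q < C (x - h)"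
    using plateau_exit_left[OF der] assms(2) True by blast
  thus ?thesis by (auto simp: trap_barrier_def min_less_iff_disj)
next
  case False
  hence "sqrt (-x) < q" using hq by (intro real_less_lsqrt) auto
  hence "C x = sqrt (-x)" using assms(4) by (simp add: trap_barrier_def)
  then obtain d where "d > 0" "\<forall>h. 0 < h \<longrightarrow> h < d \<longrightarrow> sqrt (-(x - h)) < C (x - h)"
    using parabola_exit_left[OF der] assms(3) False by force
  thus ?thesis by (auto simp: trap_barrier_def min_less_iff_disj)
qed

lemma ode_solution_below_sqrt:
  fixes C :: "real \<Rightarrow> real" and c V :: real
  assumes init: "C (q - 1) = q" and der0: "(C has_real_derivative c) (at (q - 1))" and "c < 0"
    and ode: "\<And>V. q - 1 < V \<Longrightarrow> V < 0 \<Longrightarrow>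
      (C has_real_derivative FF m g z V (C V) / GG m g z V (C V)) (at V)"
    and V: "q - 1 \<le> V" "V < 0"
  shows "C V < sqrt (-V)"
proof -
  have "q^2 \<le> q / 2" using hq by (simp add: power2_eq_square mult_left_mono)
  hence corner: "q - 1 < -(q^2)" using hq by linarith
  obtain d where "d > 0" and decr: "\<And>h. 0 < h \<Longrightarrow> h < d \<Longrightarrow> C (q - 1 + h) < q"
    using DERIV_neg_dec_right[OF der0 \<open>c < 0\<close>] init by auto
  define a where "a = q - 1 + min d (-(q^2) - (q - 1)) / 2"
  have a: "q - 1 < a" "a < -(q^2)" "a < q - 1 + d"
    using \<open>d > 0\<close> corner by (auto simp: a_def min_def field_simps)
  show ?thesis
  proof (cases "V \<le> a")
    case True
    have "C V \<le> q" using decr[of "V - (q - 1)"] init V a True by (cases "V = q - 1") auto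
    also have "q < sqrt (-V)" using True a by (intro real_less_rsqrt) simp
    finally show ?thesis .
  next
    case False
    have "isCont C x" if "x \<in> {a..V}" for x
      using ode[of x] DERIV_isCont that a V by auto
    hence "continuous_on {a..V} C" by (simp add: continuous_at_imp_continuous_on)
    moreover have "continuous_on {a..V} (trap_barrier q)"
      unfolding trap_barrier_def by (intro continuous_intros)
    moreover have "q \<le> sqrt (-a)" using a by (intro real_le_rsqrt) simp
    hence "C a < trap_barrier q a" using decr[of "a - (q - 1)"] a by (simp add: trap_barrier_def)
    moreover have "\<exists>d>0. \<forall>h. 0 < h \<longrightarrow> h < d \<longrightarrow> trap_barrier q (x - h) < C (x - h)"
      if "a < x" "x \<le> V" "C x = trap_barrier q x" for x
      using barrier_exit_left[OF ode] that a V by simp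
    ultimately have "C V < trap_barrier q V" using False by (intro continuous_lt_barrier) auto
    thus ?thesis by (simp add: trap_barrier_def)
  qed
qed

end

theorem mainTheorem17:
  fixes m \<gamma> z c :: real and C :: "real \<Rightarrow> real"
  assumes hm: "m = 1 \<or> m = 2"
    and h\<gamma>: "1 < \<gamma>" "\<gamma> \<le> 2"
    and hz: "zg m \<gamma> < z" "z \<le> zM \<gamma>"
    and hc: "c < 0"
      "- GC6 m \<gamma> z * c^2 + (FC6 m \<gamma> z - GV6 m \<gamma> z) * c + FV6 m \<gamma> z = 0"
    and hC_an: "real_analytic_at C (V6 \<gamma> z)"
    and hC_init: "C (V6 \<gamma> z) = C6 \<gamma> z"
    and hC_der: "(C has_real_derivative c) (at (V6 \<gamma> z))"
    and hC_ode: "\<forall>V. V6 \<gamma> z < V \<and> V < 0 \<longrightarrow>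
        GG m \<gamma> z V (C V) \<noteq> 0 \<and>
        (C has_real_derivative FF m \<gamma> z V (C V) / GG m \<gamma> z V (C V)) (at V)"
    and hC_pos: "\<forall>V. V6 \<gamma> z \<le> V \<and> V < 0 \<longrightarrow> C V > 0"
  shows "(\<forall>V. V6 \<gamma> z \<le> V \<and> V < 0 \<longrightarrow> C V < sqrt (- V)) \<and> (C \<longlongrightarrow> 0) (at_left 0)"
proof -
  define q where "q = C6 \<gamma> z"
  have v6: "V6 \<gamma> z = q - 1" by (simp add: q_def C6_def)
  have hzg: "\<gamma>*z*(3+\<gamma>) > \<gamma> - 1" using zg_lower_bound[OF hm h\<gamma> hz(1)] .
  hence "0 < \<gamma> * (3 + \<gamma>) * z" using h\<gamma> by (simp add: mult_ac)
  moreover have "0 < \<gamma> * (3 + \<gamma>)" using h\<gamma> by simp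
  ultimately have z0: "0 < z" by (simp add: zero_less_mult_iff)
  have zb: "z \<le> 69/400" and disc: "0 \<le> 1 - 2*(\<gamma>+2)*z + (\<gamma>-2)^2*z^2"
    using zM_bounds[OF h\<gamma> hz(2)] by auto
  have root: "q^2 - (1+(\<gamma>-2)*z)*q + \<gamma>*z = 0" and q: "0 < q" "q \<le> 1/2"
    using C6_root[OF h\<gamma> z0 _ disc] zb by (auto simp: q_def)
  have "C (q - 1) = q" "(C has_real_derivative c) (at (q - 1))"
    using hC_init hC_der by (simp_all add: v6 q_def)
  moreover have "(C has_real_derivative FF m \<gamma> z V (C V) / GG m \<gamma> z V (C V)) (at V)"
    if "q - 1 < V" "V < 0" for V
    using hC_ode that by (simp add: v6)
  ultimately have below: "\<forall>V. V6 \<gamma> z \<le> V \<and> V < 0 \<longrightarrow> C V < sqrt (- V)"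
    using ode_solution_below_sqrt[OF hm h\<gamma> z0 zb hzg root q _ _ hc(1)] by (simp add: v6)
  have near0: "\<forall>\<^sub>F V in at_left 0. V \<in> {V6 \<gamma> z<..<0}"
    using q by (intro eventually_at_left_real) (simp add: v6)
  have "\<forall>\<^sub>F V in at_left 0. 0 \<le> C V"
    using near0 by eventually_elim (use hC_pos in \<open>auto intro: less_imp_le\<close>)
  moreover have "\<forall>\<^sub>F V in at_left 0. C V \<le> sqrt (- V)"
    using near0 by eventually_elim (use below in \<open>auto intro: less_imp_le\<close>)
  moreover have "((\<lambda>V. sqrt (- V)) \<longlongrightarrow> sqrt (- 0)) (at_left (0::real))"
    by (intro tendsto_intros)
  ultimately have "(C \<longlongrightarrow> 0) (at_left 0)"
    using tendsto_sandwich[OF _ _ tendsto_const] by simp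
  with below show ?thesis by blast
qed

end
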